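(* The inverse hull $IH(C)$ of a Garside monoid $C$ is a bisimple $F$-inverse monoid.
   Context: A Garside monoid is a cancellative monoid $C$ whose only unit is the identity, such that any two elements have a least common left multiple, a least common right multiple, a greatest common left divisor and a greatest common right divisor (i.e. $C$ is a lattice under both left and right divisibility), and which satisfies the standard finiteness conditions (every element has a bound on the lengths of its factorizations into non-identity elements, and there is a Garside element whose left and right divisors coincide, are finite in number and generate $C$). For a right cancellative monoid $C$ and $a\in C$, $\rho_a:C\to C$, $x\mapsto xa$, is a partial bijection of $C$; $IH(C)$ is the inverse submonoid of the symmetric inverse monoid on $C$ generated by all $\rho_a$. An inverse monoid is bisimple if all its elements are $\mathscr{D}$-related, and $F$-inverse if every element lies beneath a unique maximal element in the natural partial order ($a\le b$ iff $a=eb$ for an idempotent $e$). *)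

theory Defs
  imports "HOL-Algebra.Group"
begin

definition mprod :: "('a, 'b) monoid_scheme \<Rightarrow> 'a list \<Rightarrow> 'a" where
  "mprod M xs = foldr (\<lambda>x y. x \<otimes>\<^bsub>M\<^esub> y) xs \<one>\<^bsub>M\<^esub>"

definition ldiv :: "('a, 'b) monoid_scheme \<Rightarrow> 'a \<Rightarrow> 'a \<Rightarrow> bool" where
  "ldiv M a b \<longleftrightarrow> (\<exists>c\<in>carrier M. a \<otimes>\<^bsub>M\<^esub> c = b)"

definition rdiv :: "('a, 'b) monoid_scheme \<Rightarrow> 'a \<Rightarrow> 'a \<Rightarrow> bool" where
  "rdiv M a b \<longleftrightarrow> (\<exists>c\<in>carrier M. c \<otimes>\<^bsub>M\<^esub> a = b)"

definition div_lattice :: "'a set \<Rightarrow> ('a \<Rightarrow> 'a \<Rightarrow> bool) \<Rightarrow> bool" where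
  "div_lattice C r \<longleftrightarrow>
     (\<forall>a\<in>C. \<forall>b\<in>C.
        (\<exists>m\<in>C. r a m \<and> r b m \<and> (\<forall>x\<in>C. r a x \<and> r b x \<longrightarrow> r m x)) \<and>
        (\<exists>d\<in>C. r d a \<and> r d b \<and> (\<forall>x\<in>C. r x a \<and> r x b \<longrightarrow> r x d)))"

definition garside_monoid :: "('a, 'b) monoid_scheme \<Rightarrow> bool" where
  "garside_monoid M \<longleftrightarrow>
     monoid M \<and>
     \<comment> \<open>cancellative\<close>
     (\<forall>a\<in>carrier M. \<forall>b\<in>carrier M. \<forall>c\<in>carrier M.
        a \<otimes>\<^bsub>M\<^esub> b = a \<otimes>\<^bsub>M\<^esub> c \<longrightarrow> b = c) \<and>
     (\<forall>a\<in>carrier M. \<forall>b\<in>carrier M. \<forall>c\<in>carrier M.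
        b \<otimes>\<^bsub>M\<^esub> a = c \<otimes>\<^bsub>M\<^esub> a \<longrightarrow> b = c) \<and>
     \<comment> \<open>the only unit is the identity\<close>
     (\<forall>a\<in>carrier M. \<forall>b\<in>carrier M.
        a \<otimes>\<^bsub>M\<^esub> b = \<one>\<^bsub>M\<^esub> \<longrightarrow> a = \<one>\<^bsub>M\<^esub>) \<and>
     \<comment> \<open>lattice for left and for right divisibility\<close>
     div_lattice (carrier M) (ldiv M) \<and>
     div_lattice (carrier M) (rdiv M) \<and>
     \<comment> \<open>bounded lengths of factorizations into non-identity elements\<close>
     (\<forall>a\<in>carrier M. \<exists>N::nat. \<forall>xs.
        set xs \<subseteq> carrier M - {\<one>\<^bsub>M\<^esub>} \<and> mprod M xs = a \<longrightarrow> length xs \<le> N) \<and>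
     \<comment> \<open>existence of a Garside element\<close>
     (\<exists>\<Delta>\<in>carrier M.
        {x\<in>carrier M. ldiv M x \<Delta>} = {x\<in>carrier M. rdiv M x \<Delta>} \<and>
        finite {x\<in>carrier M. ldiv M x \<Delta>} \<and>
        (\<forall>a\<in>carrier M. \<exists>xs. set xs \<subseteq> {x\<in>carrier M. ldiv M x \<Delta>} \<and> mprod M xs = a))"

text \<open>Partial bijections of the carrier are partial maps. The product f g in the
  symmetric inverse monoid is "first f, then g", so that rho a rho b = rho (a b).\<close>

definition idmap :: "('a, 'b) monoid_scheme \<Rightarrow> 'a \<rightharpoonup> 'a" where
  "idmap M = (\<lambda>x. if x \<in> carrier M then Some x else None)"

definition rho :: "('a, 'b) monoid_scheme \<Rightarrow> 'a \<Rightarrow> 'a \<rightharpoonup> 'a" where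
  "rho M a = (\<lambda>x. if x \<in> carrier M then Some (x \<otimes>\<^bsub>M\<^esub> a) else None)"

definition pinv :: "('a \<rightharpoonup> 'a) \<Rightarrow> 'a \<rightharpoonup> 'a" where
  "pinv f = (\<lambda>y. if y \<in> ran f then Some (THE x. f x = Some y) else None)"

inductive_set IH_set :: "('a, 'b) monoid_scheme \<Rightarrow> ('a \<rightharpoonup> 'a) set" for M where
  IH_one: "idmap M \<in> IH_set M"
| IH_gen: "a \<in> carrier M \<Longrightarrow> rho M a \<in> IH_set M"
| IH_inv: "f \<in> IH_set M \<Longrightarrow> pinv f \<in> IH_set M"
| IH_comp: "f \<in> IH_set M \<Longrightarrow> g \<in> IH_set M \<Longrightarrow> (g \<circ>\<^sub>m f) \<in> IH_set M"

definition IH :: "('a, 'b) monoid_scheme \<Rightarrow> ('a \<rightharpoonup> 'a) monoid" where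
  "IH M = \<lparr>carrier = IH_set M, mult = (\<lambda>f g. g \<circ>\<^sub>m f), one = idmap M\<rparr>"

definition inverse_monoid :: "('a, 'b) monoid_scheme \<Rightarrow> bool" where
  "inverse_monoid S \<longleftrightarrow> monoid S \<and>
     (\<forall>a\<in>carrier S. \<exists>!b. b \<in> carrier S \<and>
        a \<otimes>\<^bsub>S\<^esub> b \<otimes>\<^bsub>S\<^esub> a = a \<and> b \<otimes>\<^bsub>S\<^esub> a \<otimes>\<^bsub>S\<^esub> b = b)"

definition green_L :: "('a, 'b) monoid_scheme \<Rightarrow> 'a \<Rightarrow> 'a \<Rightarrow> bool" where
  "green_L S a b \<longleftrightarrow> (\<lambda>x. x \<otimes>\<^bsub>S\<^esub> a) ` carrier S = (\<lambda>x. x \<otimes>\<^bsub>S\<^esub> b) ` carrier S"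

definition green_R :: "('a, 'b) monoid_scheme \<Rightarrow> 'a \<Rightarrow> 'a \<Rightarrow> bool" where
  "green_R S a b \<longleftrightarrow> (\<lambda>x. a \<otimes>\<^bsub>S\<^esub> x) ` carrier S = (\<lambda>x. b \<otimes>\<^bsub>S\<^esub> x) ` carrier S"

definition green_D :: "('a, 'b) monoid_scheme \<Rightarrow> 'a \<Rightarrow> 'a \<Rightarrow> bool" where
  "green_D S a b \<longleftrightarrow> (\<exists>c\<in>carrier S. green_L S a c \<and> green_R S c b)"

definition bisimple :: "('a, 'b) monoid_scheme \<Rightarrow> bool" where
  "bisimple S \<longleftrightarrow> inverse_monoid S \<and> (\<forall>a\<in>carrier S. \<forall>b\<in>carrier S. green_D S a b)"

definition nat_le :: "('a, 'b) monoid_scheme \<Rightarrow> 'a \<Rightarrow> 'a \<Rightarrow> bool" where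
  "nat_le S a b \<longleftrightarrow> (\<exists>e\<in>carrier S. e \<otimes>\<^bsub>S\<^esub> e = e \<and> a = e \<otimes>\<^bsub>S\<^esub> b)"

definition nat_maximal :: "('a, 'b) monoid_scheme \<Rightarrow> 'a \<Rightarrow> bool" where
  "nat_maximal S m \<longleftrightarrow> m \<in> carrier S \<and> (\<forall>x\<in>carrier S. nat_le S m x \<longrightarrow> x = m)"

definition F_inverse :: "('a, 'b) monoid_scheme \<Rightarrow> bool" where
  "F_inverse S \<longleftrightarrow> inverse_monoid S \<and>
     (\<forall>a\<in>carrier S. \<exists>!m. nat_maximal S m \<and> nat_le S a m)"

end

theory Submission
  imports Defs
begin

text \<open>Right cancellativity together with least common left multiples makes every element of
  IH(C) a map \<open>\<rho>\<^sub>a\<^sup>-\<^sup>1\<rho>\<^sub>b : y a \<mapsto> y b\<close>: the composite of \<open>\<rho>\<^sub>a\<^sup>-\<^sup>1\<rho>\<^sub>b\<close> and \<open>\<rho>\<^sub>c\<^sup>-\<^sup>1\<rho>\<^sub>d\<close>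
  is \<open>\<rho>\<^sub>u\<^sub>a\<^sup>-\<^sup>1\<rho>\<^sub>v\<^sub>d\<close>, where \<open>u b = v c\<close> is the least common left multiple of \<open>b\<close> and \<open>c\<close>.
  The inverse of \<open>\<rho>\<^sub>a\<^sup>-\<^sup>1\<rho>\<^sub>b\<close> is \<open>\<rho>\<^sub>b\<^sup>-\<^sup>1\<rho>\<^sub>a\<close>, and \<open>\<rho>\<^sub>a\<^sup>-\<^sup>1\<rho>\<^sub>b\<close> is \<open>\<D>\<close>-related to \<open>\<rho>\<^sub>c\<^sup>-\<^sup>1\<rho>\<^sub>d\<close>
  through \<open>\<rho>\<^sub>c\<^sup>-\<^sup>1\<rho>\<^sub>b\<close>. In the natural order \<open>\<rho>\<^sub>a\<^sup>-\<^sup>1\<rho>\<^sub>b \<le> \<rho>\<^sub>c\<^sup>-\<^sup>1\<rho>\<^sub>d\<close> iff \<open>(a, b) = u (c, d)\<close>,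
  so the maximal elements come from pairs without a non-trivial common left divisor, and the
  unique maximal element above \<open>\<rho>\<^sub>a\<^sup>-\<^sup>1\<rho>\<^sub>b\<close> is obtained by cancelling the greatest common
  left divisor of \<open>a\<close> and \<open>b\<close>.\<close>

lemma map_comp_assoc: "(f \<circ>\<^sub>m g) \<circ>\<^sub>m h = f \<circ>\<^sub>m (g \<circ>\<^sub>m h)"
  by (rule ext) (simp add: map_comp_def split: option.split)

lemma map_eqI: "(\<And>x z. f x = Some z \<longleftrightarrow> g x = Some z) \<Longrightarrow> f = g"
  by (rule ext) (metis not_None_eq)

definition partial_inj :: "('a \<rightharpoonup> 'b) \<Rightarrow> bool" where
  "partial_inj f \<longleftrightarrow> (\<forall>x x' z. f x = Some z \<longrightarrow> f x' = Some z \<longrightarrow> x = x')"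

lemma pinv_Some:
  assumes "partial_inj f"
  shows "pinv f y = Some z \<longleftrightarrow> f z = Some y"
proof -
  have the_eq: "(THE x. f x = Some y) = x" if "f x = Some y" for x
    using that assms unfolding partial_inj_def by blast
  show ?thesis
    using assms unfolding pinv_def ran_def partial_inj_def by (auto simp: the_eq)
qed

lemma partial_inverse_unique:
  assumes f: "partial_inj f" and g: "partial_inj g"
    and fgf: "f \<circ>\<^sub>m (g \<circ>\<^sub>m f) = f" and gfg: "g \<circ>\<^sub>m (f \<circ>\<^sub>m g) = g"
  shows "g = pinv f"
proof (rule map_eqI)
  fix y z
  have "f z = Some y" if gy: "g y = Some z"
  proof -
    have "(g \<circ>\<^sub>m (f \<circ>\<^sub>m g)) y = Some z" using gfg gy by simp
    then obtain w where "f z = Some w" "g w = Some z"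
      using gy by (auto simp: map_comp_Some_iff)
    with gy g show ?thesis unfolding partial_inj_def by blast
  qed
  moreover have "g y = Some z" if fz: "f z = Some y"
  proof -
    have "(f \<circ>\<^sub>m (g \<circ>\<^sub>m f)) z = Some y" using fgf fz by simp
    then obtain w where "g y = Some w" "f w = Some y"
      using fz by (auto simp: map_comp_Some_iff)
    with fz f show ?thesis unfolding partial_inj_def by blast
  qed
  ultimately show "g y = Some z \<longleftrightarrow> pinv f y = Some z"
    unfolding pinv_Some[OF f] by blast
qed

lemma (in monoid) green_LI:
  assumes carr: "a \<in> carrier G" "b \<in> carrier G" "x \<in> carrier G" "y \<in> carrier G"
    and ab: "a = x \<otimes> b" and ba: "b = y \<otimes> a"
  shows "green_L G a b"
  unfolding green_L_def
proof (intro equalityI image_subsetI)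
  fix z assume z: "z \<in> carrier G"
  have "z \<otimes> a = (z \<otimes> x) \<otimes> b" "z \<otimes> b = (z \<otimes> y) \<otimes> a"
    by (subst ab ba, simp add: m_assoc carr z)+
  then show "z \<otimes> a \<in> (\<lambda>z. z \<otimes> b) ` carrier G" "z \<otimes> b \<in> (\<lambda>z. z \<otimes> a) ` carrier G"
    using carr z by auto
qed

lemma (in monoid) green_RI:
  assumes carr: "a \<in> carrier G" "b \<in> carrier G" "x \<in> carrier G" "y \<in> carrier G"
    and ab: "a = b \<otimes> x" and ba: "b = a \<otimes> y"
  shows "green_R G a b"
  unfolding green_R_def
proof (intro equalityI image_subsetI)
  fix z assume z: "z \<in> carrier G"
  have "a \<otimes> z = b \<otimes> (x \<otimes> z)" "b \<otimes> z = a \<otimes> (y \<otimes> z)"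
    by (subst ab ba, simp add: m_assoc carr z)+
  then show "a \<otimes> z \<in> (\<lambda>z. b \<otimes> z) ` carrier G" "b \<otimes> z \<in> (\<lambda>z. a \<otimes> z) ` carrier G"
    using carr z by auto
qed

section \<open>Right cancellative monoids: the maps \<open>\<rho>\<^sub>a\<^sup>-\<^sup>1\<rho>\<^sub>b\<close>\<close>

definition left_lcm :: "('a, 'b) monoid_scheme \<Rightarrow> 'a \<Rightarrow> 'a \<Rightarrow> 'a \<Rightarrow> bool" where
  "left_lcm M b c m \<longleftrightarrow> rdiv M b m \<and> rdiv M c m \<and>
     (\<forall>x\<in>carrier M. rdiv M b x \<and> rdiv M c x \<longrightarrow> rdiv M m x)"

definition left_gcd :: "('a, 'b) monoid_scheme \<Rightarrow> 'a \<Rightarrow> 'a \<Rightarrow> 'a \<Rightarrow> bool" where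
  "left_gcd M a b g \<longleftrightarrow> ldiv M g a \<and> ldiv M g b \<and>
     (\<forall>x\<in>carrier M. ldiv M x a \<and> ldiv M x b \<longrightarrow> ldiv M x g)"

definition left_coprime :: "('a, 'b) monoid_scheme \<Rightarrow> 'a \<Rightarrow> 'a \<Rightarrow> bool" where
  "left_coprime M a b \<longleftrightarrow> (\<forall>w\<in>carrier M. ldiv M w a \<and> ldiv M w b \<longrightarrow> w = \<one>\<^bsub>M\<^esub>)"

definition rho_frac :: "('a, 'b) monoid_scheme \<Rightarrow> 'a \<Rightarrow> 'a \<Rightarrow> 'a \<rightharpoonup> 'a" where
  "rho_frac M a b = rho M b \<circ>\<^sub>m pinv (rho M a)"

locale right_cancel_monoid = monoid M for M (structure) +
  assumes r_cancel:
    "\<lbrakk>b \<otimes> a = c \<otimes> a; a \<in> carrier M; b \<in> carrier M; c \<in> carrier M\<rbrakk> \<Longrightarrow> b = c"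
begin

lemma rho_Some: "rho M a y = Some x \<longleftrightarrow> y \<in> carrier M \<and> x = y \<otimes> a"
  unfolding rho_def by auto

lemma partial_inj_rho: "a \<in> carrier M \<Longrightarrow> partial_inj (rho M a)"
  unfolding partial_inj_def rho_Some using r_cancel by blast

lemma rho_frac_Some:
  assumes "a \<in> carrier M"
  shows "rho_frac M a b x = Some z \<longleftrightarrow> (\<exists>y\<in>carrier M. x = y \<otimes> a \<and> z = y \<otimes> b)"
  unfolding rho_frac_def map_comp_Some_iff pinv_Some[OF partial_inj_rho[OF assms]] rho_Some
  by blast

lemma rho_frac_self:
  assumes "a \<in> carrier M" "b \<in> carrier M"
  shows "rho_frac M a b a = Some b"
  using assms by (auto simp: rho_frac_Some intro: bexI[of _ \<one>])

lemma partial_inj_rho_frac: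
  assumes "a \<in> carrier M" "b \<in> carrier M"
  shows "partial_inj (rho_frac M a b)"
  unfolding partial_inj_def rho_frac_Some[OF assms(1)] using r_cancel[OF _ assms(2)] by blast

lemma pinv_rho_frac:
  assumes "a \<in> carrier M" "b \<in> carrier M"
  shows "pinv (rho_frac M a b) = rho_frac M b a"
  by (rule map_eqI) (auto simp: rho_frac_Some assms pinv_Some[OF partial_inj_rho_frac[OF assms]])

lemma idmap_eq_rho_frac: "idmap M = rho_frac M \<one> \<one>"
  by (rule map_eqI) (auto simp: rho_frac_Some idmap_def)

lemma rho_eq_rho_frac: "a \<in> carrier M \<Longrightarrow> rho M a = rho_frac M \<one> a"
  by (rule map_eqI) (auto simp: rho_frac_Some rho_def)

lemma rho_frac_in_IH_set: "a \<in> carrier M \<Longrightarrow> b \<in> carrier M \<Longrightarrow> rho_frac M a b \<in> IH_set M"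
  unfolding rho_frac_def by (intro IH_comp IH_inv IH_gen)

lemma rho_frac_comp:
  assumes carr: "a \<in> carrier M" "b \<in> carrier M" "c \<in> carrier M" "d \<in> carrier M"
      "u \<in> carrier M" "v \<in> carrier M"
    and lcm: "u \<otimes> b = v \<otimes> c" "left_lcm M b c (u \<otimes> b)"
  shows "rho_frac M c d \<circ>\<^sub>m rho_frac M a b = rho_frac M (u \<otimes> a) (v \<otimes> d)"
proof (rule map_eqI)
  fix x z
  have "(\<exists>y\<in>carrier M. \<exists>y'\<in>carrier M. x = y \<otimes> a \<and> y \<otimes> b = y' \<otimes> c \<and> z = y' \<otimes> d)
    \<longleftrightarrow> (\<exists>t\<in>carrier M. x = t \<otimes> (u \<otimes> a) \<and> z = t \<otimes> (v \<otimes> d))" (is "?L \<longleftrightarrow> ?R")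
  proof
    assume ?L
    then obtain y y' where y: "y \<in> carrier M" "y' \<in> carrier M"
      and eqs: "x = y \<otimes> a" "y \<otimes> b = y' \<otimes> c" "z = y' \<otimes> d" by blast
    have "rdiv M b (y \<otimes> b)" "rdiv M c (y \<otimes> b)"
      unfolding rdiv_def using y eqs(2) by auto
    then obtain t where t: "t \<in> carrier M" "t \<otimes> (u \<otimes> b) = y \<otimes> b"
      using lcm(2) y carr unfolding left_lcm_def rdiv_def by auto
    \<comment> \<open>\<open>y b = y' c\<close> is a common left multiple, so it factors through the least one\<close>
    have "(t \<otimes> u) \<otimes> b = y \<otimes> b" "(t \<otimes> v) \<otimes> c = y' \<otimes> c"
      using t lcm(1) eqs(2) carr by (simp_all add: m_assoc)
    then have "t \<otimes> u = y" "t \<otimes> v = y'"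
      using r_cancel t y carr by simp_all
    then show ?R using t eqs carr by (auto simp: m_assoc)
  next
    assume ?R
    then obtain t where t: "t \<in> carrier M" "x = t \<otimes> (u \<otimes> a)" "z = t \<otimes> (v \<otimes> d)" by blast
    moreover have "(t \<otimes> u) \<otimes> b = (t \<otimes> v) \<otimes> c"
      using t(1) carr by (simp add: m_assoc lcm(1))
    ultimately show ?L using carr
      by (intro bexI[of _ "t \<otimes> u"] bexI[of _ "t \<otimes> v"]) (simp_all add: m_assoc)
  qed
  then show "(rho_frac M c d \<circ>\<^sub>m rho_frac M a b) x = Some z \<longleftrightarrow>
      rho_frac M (u \<otimes> a) (v \<otimes> d) x = Some z"
    using carr by (auto simp: map_comp_Some_iff rho_frac_Some)
qed

lemma left_lcm_left_multiple:
  assumes "b \<in> carrier M" "u \<in> carrier M"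
  shows "left_lcm M (u \<otimes> b) b (u \<otimes> b)" "left_lcm M b (u \<otimes> b) (u \<otimes> b)"
proof -
  have "rdiv M (u \<otimes> b) (u \<otimes> b)" "rdiv M b (u \<otimes> b)"
    unfolding rdiv_def using assms by (auto intro: bexI[of _ \<one>])
  then show "left_lcm M (u \<otimes> b) b (u \<otimes> b)" "left_lcm M b (u \<otimes> b) (u \<otimes> b)"
    unfolding left_lcm_def by blast+
qed

lemma rho_frac_chain:
  assumes "a \<in> carrier M" "b \<in> carrier M" "d \<in> carrier M"
  shows "rho_frac M b d \<circ>\<^sub>m rho_frac M a b = rho_frac M a d"
  using rho_frac_comp[of a b b d \<one> \<one>] left_lcm_left_multiple[of b \<one>] assms by simp

lemma rho_frac_idmap_left:
  assumes "a \<in> carrier M" "b \<in> carrier M"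
  shows "idmap M \<circ>\<^sub>m rho_frac M a b = rho_frac M a b"
  using rho_frac_comp[of a b \<one> \<one> \<one> b] left_lcm_left_multiple[of \<one> b] assms
  by (simp add: idmap_eq_rho_frac)

lemma rho_frac_idmap_right:
  assumes "a \<in> carrier M" "b \<in> carrier M"
  shows "rho_frac M a b \<circ>\<^sub>m idmap M = rho_frac M a b"
  using rho_frac_comp[of \<one> \<one> a b a \<one>] left_lcm_left_multiple[of \<one> a] assms
  by (simp add: idmap_eq_rho_frac)

lemma rho_frac_restrict:
  assumes "c \<in> carrier M" "d \<in> carrier M" "u \<in> carrier M"
  shows "rho_frac M c d \<circ>\<^sub>m rho_frac M (u \<otimes> c) (u \<otimes> c) = rho_frac M (u \<otimes> c) (u \<otimes> d)"
  using rho_frac_comp[of "u \<otimes> c" "u \<otimes> c" c d \<one> u] assms left_lcm_left_multiple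
  by simp

end

section \<open>The inverse hull of a right cancellative monoid with least common left multiples\<close>

locale left_lcm_monoid = right_cancel_monoid +
  assumes left_lcm_exists: "\<lbrakk>b \<in> carrier M; c \<in> carrier M\<rbrakk> \<Longrightarrow> \<exists>m. left_lcm M b c m"
begin

lemma IH_set_eq: "IH_set M = {rho_frac M a b | a b. a \<in> carrier M \<and> b \<in> carrier M}"
proof (intro equalityI subsetI)
  fix f assume "f \<in> IH_set M"
  then show "f \<in> {rho_frac M a b | a b. a \<in> carrier M \<and> b \<in> carrier M}"
  proof (induction rule: IH_set.induct)
    case IH_one then show ?case using idmap_eq_rho_frac by auto
  next
    case (IH_gen a) then show ?case using rho_eq_rho_frac by auto
  next
    case (IH_inv f) then show ?case using pinv_rho_frac by auto
  next
    case (IH_comp f g)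
    then obtain a b c d where carr: "a \<in> carrier M" "b \<in> carrier M" "c \<in> carrier M"
      "d \<in> carrier M" and fg: "f = rho_frac M a b" "g = rho_frac M c d" by blast
    obtain m where m: "left_lcm M b c m" using left_lcm_exists carr by blast
    then obtain u v where "u \<in> carrier M" "v \<in> carrier M" "m = u \<otimes> b" "m = v \<otimes> c"
      unfolding left_lcm_def rdiv_def by metis
    then show ?case using rho_frac_comp[of a b c d u v] m carr fg by force
  qed
qed (auto intro: rho_frac_in_IH_set)

lemma IH_setE:
  assumes "f \<in> IH_set M"
  obtains a b where "a \<in> carrier M" "b \<in> carrier M" "f = rho_frac M a b"
  using assms unfolding IH_set_eq by blast

lemma partial_inj_IH: "f \<in> IH_set M \<Longrightarrow> partial_inj f"
  by (metis IH_setE partial_inj_rho_frac)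

lemma IH_simps: "carrier (IH M) = IH_set M" "f \<otimes>\<^bsub>IH M\<^esub> g = g \<circ>\<^sub>m f" "\<one>\<^bsub>IH M\<^esub> = idmap M"
  by (simp_all add: IH_def)

lemma monoid_IH: "monoid (IH M)"
proof (rule monoidI)
  fix f assume "f \<in> carrier (IH M)"
  then obtain a b where "a \<in> carrier M" "b \<in> carrier M" "f = rho_frac M a b"
    unfolding IH_simps by (rule IH_setE)
  then show "\<one>\<^bsub>IH M\<^esub> \<otimes>\<^bsub>IH M\<^esub> f = f" "f \<otimes>\<^bsub>IH M\<^esub> \<one>\<^bsub>IH M\<^esub> = f"
    unfolding IH_simps by (simp_all add: rho_frac_idmap_left rho_frac_idmap_right)
qed (auto simp: IH_simps map_comp_assoc intro: IH_set.intros)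

lemma inverse_monoid_IH: "inverse_monoid (IH M)"
  unfolding inverse_monoid_def
proof (intro conjI monoid_IH ballI)
  fix f assume "f \<in> carrier (IH M)"
  then obtain a b where carr: "a \<in> carrier M" "b \<in> carrier M" and f: "f = rho_frac M a b"
    unfolding IH_simps by (rule IH_setE)
  have "f \<circ>\<^sub>m (rho_frac M b a \<circ>\<^sub>m f) = f" "rho_frac M b a \<circ>\<^sub>m (f \<circ>\<^sub>m rho_frac M b a) = rho_frac M b a"
    unfolding f using rho_frac_chain carr by simp_all
  moreover have "g = rho_frac M b a"
    if "g \<in> IH_set M" "f \<circ>\<^sub>m (g \<circ>\<^sub>m f) = f" "g \<circ>\<^sub>m (f \<circ>\<^sub>m g) = g" for g
    using partial_inverse_unique[of f g] that partial_inj_IH partial_inj_rho_frac carr f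
    by (simp add: pinv_rho_frac)
  ultimately show "\<exists>!g. g \<in> carrier (IH M) \<and> f \<otimes>\<^bsub>IH M\<^esub> g \<otimes>\<^bsub>IH M\<^esub> f = f \<and>
      g \<otimes>\<^bsub>IH M\<^esub> f \<otimes>\<^bsub>IH M\<^esub> g = g"
    unfolding IH_simps using rho_frac_in_IH_set carr by (intro ex1I[of _ "rho_frac M b a"]) auto
qed

lemma bisimple_IH: "bisimple (IH M)"
  unfolding bisimple_def
proof (intro conjI inverse_monoid_IH ballI)
  interpret IH: monoid "IH M" by (rule monoid_IH)
  fix f g assume "f \<in> carrier (IH M)" "g \<in> carrier (IH M)"
  then obtain a b c d where carr: "a \<in> carrier M" "b \<in> carrier M" "c \<in> carrier M" "d \<in> carrier M"
    and fg: "f = rho_frac M a b" "g = rho_frac M c d"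
    unfolding IH_simps by (metis IH_setE)
  let ?h = "rho_frac M c b"
  have "green_L (IH M) f ?h"
    using carr fg rho_frac_chain[of a c b] rho_frac_chain[of c a b]
    by (intro IH.green_LI[of _ _ "rho_frac M a c" "rho_frac M c a"])
      (simp_all add: IH_simps rho_frac_in_IH_set)
  moreover have "green_R (IH M) ?h g"
    using carr fg rho_frac_chain[of c d b] rho_frac_chain[of c b d]
    by (intro IH.green_RI[of _ _ "rho_frac M d b" "rho_frac M b d"])
      (simp_all add: IH_simps rho_frac_in_IH_set)
  ultimately show "green_D (IH M) f g"
    unfolding green_D_def IH_simps using carr rho_frac_in_IH_set by blast
qed

lemma nat_le_rho_frac_iff:
  assumes carr: "a \<in> carrier M" "b \<in> carrier M" "c \<in> carrier M" "d \<in> carrier M"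
  shows "nat_le (IH M) (rho_frac M a b) (rho_frac M c d) \<longleftrightarrow>
    (\<exists>u\<in>carrier M. a = u \<otimes> c \<and> b = u \<otimes> d)"
proof
  assume "nat_le (IH M) (rho_frac M a b) (rho_frac M c d)"
  then obtain e where e: "e \<in> IH_set M" "e \<circ>\<^sub>m e = e"
    and eq: "rho_frac M a b = rho_frac M c d \<circ>\<^sub>m e"
    unfolding nat_le_def IH_simps by blast
  have "(rho_frac M c d \<circ>\<^sub>m e) a = Some b" using rho_frac_self[of a b] carr by (simp add: eq)
  then obtain z where z: "e a = Some z" "rho_frac M c d z = Some b"
    by (auto simp: map_comp_Some_iff)
  \<comment> \<open>an idempotent partial injection is the identity on its domain\<close>
  have "(e \<circ>\<^sub>m e) a = Some z" using e(2) z(1) by simp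
  then have "e z = Some z" using z(1) by (simp add: map_comp_Some_iff)
  then have "z = a"
    using z(1) partial_inj_IH[OF e(1)] unfolding partial_inj_def by blast
  then show "\<exists>u\<in>carrier M. a = u \<otimes> c \<and> b = u \<otimes> d"
    using z(2) carr by (auto simp: rho_frac_Some)
next
  assume "\<exists>u\<in>carrier M. a = u \<otimes> c \<and> b = u \<otimes> d"
  then obtain u where "u \<in> carrier M" "a = u \<otimes> c" "b = u \<otimes> d" by blast
  then show "nat_le (IH M) (rho_frac M a b) (rho_frac M c d)"
    unfolding nat_le_def IH_simps
    using rho_frac_restrict[of c d u] rho_frac_chain[of a a a] carr rho_frac_in_IH_set
    by (intro bexI[of _ "rho_frac M a a"]) auto
qed

end

section \<open>Cancellative monoids with left gcds and left lcms\<close>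

locale gcd_lcm_monoid = left_lcm_monoid +
  assumes l_cancel:
    "\<lbrakk>a \<otimes> b = a \<otimes> c; a \<in> carrier M; b \<in> carrier M; c \<in> carrier M\<rbrakk> \<Longrightarrow> b = c"
    and unit_free: "\<lbrakk>a \<otimes> b = \<one>; a \<in> carrier M; b \<in> carrier M\<rbrakk> \<Longrightarrow> a = \<one>"
    and left_gcd_exists: "\<lbrakk>a \<in> carrier M; b \<in> carrier M\<rbrakk> \<Longrightarrow> \<exists>g\<in>carrier M. left_gcd M a b g"
begin

lemma left_multiple_eq_self:
  assumes "x \<in> carrier M" "a \<in> carrier M" "x \<otimes> a = a"
  shows "x = \<one>"
  using r_cancel[of x a \<one>] assms by simp

lemma rho_frac_inject:
  assumes carr: "a \<in> carrier M" "b \<in> carrier M" "c \<in> carrier M" "d \<in> carrier M"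
    and eq: "rho_frac M a b = rho_frac M c d"
  shows "a = c" "b = d"
proof -
  obtain y where y: "y \<in> carrier M" "a = y \<otimes> c" "b = y \<otimes> d"
    using rho_frac_self[of a b] carr eq by (auto simp: rho_frac_Some)
  obtain y' where y': "y' \<in> carrier M" "c = y' \<otimes> a"
    using rho_frac_self[of c d] carr eq[symmetric] by (auto simp: rho_frac_Some)
  have "y \<otimes> (y' \<otimes> a) = a" using y(2) y'(2) by metis
  then have "y \<otimes> y' = \<one>"
    using left_multiple_eq_self[of "y \<otimes> y'" a] y(1) y'(1) carr by (simp add: m_assoc)
  then have "y = \<one>" using unit_free y(1) y'(1) by blast
  then show "a = c" "b = d" using y carr by simp_all
qed

lemma left_coprime_cofactors:
  assumes carr: "g \<in> carrier M" "a' \<in> carrier M" "b' \<in> carrier M"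
    and gcd: "left_gcd M (g \<otimes> a') (g \<otimes> b') g"
  shows "left_coprime M a' b'"
  unfolding left_coprime_def
proof (intro ballI impI)
  fix w assume w: "w \<in> carrier M" and "ldiv M w a' \<and> ldiv M w b'"
  then obtain s s' where s: "s \<in> carrier M" "s' \<in> carrier M" "w \<otimes> s = a'" "w \<otimes> s' = b'"
    unfolding ldiv_def by blast
  have "ldiv M (g \<otimes> w) (g \<otimes> a')" "ldiv M (g \<otimes> w) (g \<otimes> b')"
    unfolding ldiv_def using s carr w by (auto simp: m_assoc)
  then have "ldiv M (g \<otimes> w) g" using gcd w carr unfolding left_gcd_def by blast
  then obtain t where t: "t \<in> carrier M" "g \<otimes> w \<otimes> t = g" unfolding ldiv_def by blast
  then have "g \<otimes> (w \<otimes> t) = g \<otimes> \<one>" using w carr by (simp add: m_assoc)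
  then have "w \<otimes> t = \<one>" using l_cancel[of g "w \<otimes> t" \<one>] t(1) w carr by simp
  then show "w = \<one>" using unit_free t(1) w by blast
qed

lemma left_gcd_of_coprime_multiples:
  assumes carr: "u \<in> carrier M" "c \<in> carrier M" "d \<in> carrier M"
    and gcd: "left_gcd M (u \<otimes> c) (u \<otimes> d) g" and cop: "left_coprime M c d"
  shows "g = u"
proof -
  have "ldiv M u (u \<otimes> c)" "ldiv M u (u \<otimes> d)" unfolding ldiv_def using carr by auto
  then obtain t where t: "t \<in> carrier M" "g = u \<otimes> t"
    using gcd carr unfolding left_gcd_def ldiv_def by blast
  obtain s s' where s: "s \<in> carrier M" "s' \<in> carrier M" "g \<otimes> s = u \<otimes> c" "g \<otimes> s' = u \<otimes> d"
    using gcd unfolding left_gcd_def ldiv_def by blast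
  have "u \<otimes> (t \<otimes> s) = u \<otimes> c" "u \<otimes> (t \<otimes> s') = u \<otimes> d"
    using s t carr by (simp_all add: m_assoc)
  then have "t \<otimes> s = c" "t \<otimes> s' = d"
    using l_cancel s t carr by (meson m_closed)+
  then have "t = \<one>"
    using cop t(1) s unfolding left_coprime_def ldiv_def by blast
  then show "g = u" using t carr by simp
qed

lemma nat_maximal_rho_frac_iff:
  assumes carr: "c \<in> carrier M" "d \<in> carrier M"
  shows "nat_maximal (IH M) (rho_frac M c d) \<longleftrightarrow> left_coprime M c d"
proof
  assume max: "nat_maximal (IH M) (rho_frac M c d)"
  show "left_coprime M c d"
    unfolding left_coprime_def
  proof (intro ballI impI)
    fix w assume w: "w \<in> carrier M" and "ldiv M w c \<and> ldiv M w d"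
    then obtain c' d' where c'd': "c' \<in> carrier M" "d' \<in> carrier M" "w \<otimes> c' = c" "w \<otimes> d' = d"
      unfolding ldiv_def by blast
    then have "nat_le (IH M) (rho_frac M c d) (rho_frac M c' d')"
      using nat_le_rho_frac_iff carr w by auto
    moreover have "rho_frac M c' d' \<in> carrier (IH M)"
      using rho_frac_in_IH_set c'd' by (simp add: IH_simps)
    ultimately have "rho_frac M c' d' = rho_frac M c d"
      using max unfolding nat_maximal_def by blast
    then have "c' = c" using rho_frac_inject(1)[OF c'd'(1,2) carr] by simp
    then show "w = \<one>" using left_multiple_eq_self w c'd' by simp
  qed
next
  assume cop: "left_coprime M c d"
  show "nat_maximal (IH M) (rho_frac M c d)"
    unfolding nat_maximal_def
  proof (intro conjI ballI impI)
    fix f assume f: "f \<in> carrier (IH M)" and le: "nat_le (IH M) (rho_frac M c d) f"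
    from f obtain c' d' where c'd': "c' \<in> carrier M" "d' \<in> carrier M" "f = rho_frac M c' d'"
      unfolding IH_simps by (rule IH_setE)
    then obtain u where u: "u \<in> carrier M" "c = u \<otimes> c'" "d = u \<otimes> d'"
      using le nat_le_rho_frac_iff[OF carr c'd'(1,2)] by blast
    then have "ldiv M u c" "ldiv M u d" unfolding ldiv_def using c'd' by auto
    then have "u = \<one>" using cop u(1) unfolding left_coprime_def by blast
    then show "f = rho_frac M c d" using u c'd' by simp
  qed (simp add: IH_simps rho_frac_in_IH_set carr)
qed

lemma F_inverse_IH: "F_inverse (IH M)"
  unfolding F_inverse_def
proof (intro conjI inverse_monoid_IH ballI)
  fix f assume "f \<in> carrier (IH M)"
  then obtain a b where carr: "a \<in> carrier M" "b \<in> carrier M" and f: "f = rho_frac M a b"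
    unfolding IH_simps by (rule IH_setE)
  obtain g where g: "g \<in> carrier M" "left_gcd M a b g"
    using left_gcd_exists carr by blast
  then obtain a' b' where a'b': "a' \<in> carrier M" "b' \<in> carrier M" "g \<otimes> a' = a" "g \<otimes> b' = b"
    unfolding left_gcd_def ldiv_def by blast
  have "left_coprime M a' b'"
    using left_coprime_cofactors[OF g(1) a'b'(1,2)] g(2) a'b'(3,4) by simp
  then have "nat_maximal (IH M) (rho_frac M a' b')"
    using nat_maximal_rho_frac_iff[OF a'b'(1,2)] by simp
  moreover have "nat_le (IH M) f (rho_frac M a' b')"
    unfolding f nat_le_rho_frac_iff[OF carr a'b'(1,2)] using g(1) a'b'(3,4) by blast
  moreover have "m = rho_frac M a' b'"
    if max: "nat_maximal (IH M) m" and le: "nat_le (IH M) f m" for m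
  proof -
    have "m \<in> IH_set M" using max unfolding nat_maximal_def IH_simps by simp
    then obtain c d where cd: "c \<in> carrier M" "d \<in> carrier M" "m = rho_frac M c d"
      by (rule IH_setE)
    then obtain u where u: "u \<in> carrier M" "u \<otimes> c = a" "u \<otimes> d = b"
      using le unfolding f cd(3) nat_le_rho_frac_iff[OF carr cd(1,2)] by auto
    moreover have "left_coprime M c d"
      using max cd nat_maximal_rho_frac_iff[OF cd(1,2)] by simp
    ultimately have "g = u"
      using left_gcd_of_coprime_multiples[OF u(1) cd(1,2)] g(2) by simp
    then have "a' = c" "b' = d"
      using u a'b' cd g(1) l_cancel by auto
    then show ?thesis using cd by simp
  qed
  ultimately show "\<exists>!m. nat_maximal (IH M) m \<and> nat_le (IH M) f m" by blast
qed

end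

lemma garside_monoid_imp_gcd_lcm_monoid:
  assumes "garside_monoid M"
  shows "gcd_lcm_monoid M"
proof -
  have mon: "monoid M"
    and l_cancel: "\<forall>a\<in>carrier M. \<forall>b\<in>carrier M. \<forall>c\<in>carrier M.
      a \<otimes>\<^bsub>M\<^esub> b = a \<otimes>\<^bsub>M\<^esub> c \<longrightarrow> b = c"
    and r_cancel: "\<forall>a\<in>carrier M. \<forall>b\<in>carrier M. \<forall>c\<in>carrier M.
      b \<otimes>\<^bsub>M\<^esub> a = c \<otimes>\<^bsub>M\<^esub> a \<longrightarrow> b = c"
    and unit_free: "\<forall>a\<in>carrier M. \<forall>b\<in>carrier M. a \<otimes>\<^bsub>M\<^esub> b = \<one>\<^bsub>M\<^esub> \<longrightarrow> a = \<one>\<^bsub>M\<^esub>"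
    and lattices: "div_lattice (carrier M) (ldiv M)" "div_lattice (carrier M) (rdiv M)"
    using assms unfolding garside_monoid_def by blast+
  have "\<exists>m. left_lcm M b c m" "\<exists>g\<in>carrier M. left_gcd M b c g"
    if "b \<in> carrier M" "c \<in> carrier M" for b c
    using that lattices unfolding div_lattice_def left_lcm_def left_gcd_def by blast+
  with mon l_cancel r_cancel unit_free show ?thesis
    by (intro gcd_lcm_monoid.intro left_lcm_monoid.intro right_cancel_monoid.intro
        gcd_lcm_monoid_axioms.intro left_lcm_monoid_axioms.intro right_cancel_monoid_axioms.intro)
      blast+
qed

theorem corollary4p4:
  fixes M :: "('a, 'b) monoid_scheme"
  assumes "garside_monoid M"
  shows "inverse_monoid (IH M) \<and> bisimple (IH M) \<and> F_inverse (IH M)"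
proof -
  interpret gcd_lcm_monoid M
    using assms by (rule garside_monoid_imp_gcd_lcm_monoid)
  show ?thesis using inverse_monoid_IH bisimple_IH F_inverse_IH by blast
qed

end
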